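(* Define for $a\in[1,2]$ and $b>1$ the function $g(a,b)=x\,x_1+y\,y_1$, where $$x=\frac{\sqrt{a^2-1}\,(a^3-8)}{a^6},\quad x_1=(\sqrt{a^2-1}-\sqrt{b^2-1})^3+a^3,\quad y=\frac{\sqrt{b^2-1}\,(b^3-8)}{b^6},\quad y_1=(\sqrt{a^2-1}-\sqrt{b^2-1})^3+b^3.$$ Then $g(a,b)\neq 0$ for all $(a,b)\in[1,2]\times[5/2,\sqrt2(\sqrt3+1)]$. *)

theory Defs
  imports Complex_Main
begin

definition g :: "real \<Rightarrow> real \<Rightarrow> real" where
  "g a b = (let x = sqrt (a^2 - 1) * (a^3 - 8) / a^6;
                x1 = (sqrt (a^2 - 1) - sqrt (b^2 - 1))^3 + a^3;
                y = sqrt (b^2 - 1) * (b^3 - 8) / b^6;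
                y1 = (sqrt (a^2 - 1) - sqrt (b^2 - 1))^3 + b^3
            in x * x1 + y * y1)"

end

theory Submission
  imports Defs
begin

(* With s = sqrt (a^2 - 1), t = sqrt (b^2 - 1) and d = t - s one has
   g a b = X (d^3 - a^3) + Y (b^3 - d^3), where X = s (8 - a^3) / a^6 >= 0 and
   Y = t (b^3 - 8) / b^6 >= 0 for b >= 2, and b^3 - d^3 >= 0 since d <= t <= b.
   On a box [al, ah] x [bl, bh] with rational enclosures of s and t, X, Y and d
   are enclosed by monotonicity, which yields a rational lower bound for g.
   Bisecting [1, 2] x [5/2, 31/8] into 95 boxes on each of which this lower
   bound is positive, and noting sqrt 2 (sqrt 3 + 1) < 31/8, gives g > 0. *)

lemma g_eq:
  fixes a b :: real
  defines "d \<equiv> sqrt (b^2 - 1) - sqrt (a^2 - 1)"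
  shows "g a b = sqrt (a^2 - 1) * (8 - a^3) / a^6 * (d^3 - a^3)
                 + sqrt (b^2 - 1) * (b^3 - 8) / b^6 * (b^3 - d^3)"
proof -
  have "(sqrt (a^2 - 1) - sqrt (b^2 - 1))^3 = -(d^3)"
    unfolding d_def by (simp add: power3_eq_cube algebra_simps)
  then show ?thesis
    unfolding g_def Let_def by (simp add: algebra_simps diff_divide_distrib)
qed

definition sqrt_enclosure :: "real \<Rightarrow> real \<Rightarrow> real \<Rightarrow> real \<Rightarrow> bool" where
  "sqrt_enclosure lo hi xl xh \<longleftrightarrow> 0 \<le> lo \<and> 0 \<le> hi \<and> lo^2 \<le> xl^2 - 1 \<and> xh^2 - 1 \<le> hi^2"

lemma sqrt_enclosureD:
  assumes "sqrt_enclosure lo hi xl xh" "1 \<le> xl" "xl \<le> x" "x \<le> xh"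
  shows "lo \<le> sqrt (x^2 - 1)" "sqrt (x^2 - 1) \<le> hi"
proof -
  have "xl^2 \<le> x^2" "x^2 \<le> xh^2"
    using assms(2-4) by (auto intro: power_mono)
  then show "lo \<le> sqrt (x^2 - 1)" "sqrt (x^2 - 1) \<le> hi"
    using assms(1,2) unfolding sqrt_enclosure_def
    by (auto intro!: real_le_rsqrt real_le_lsqrt simp: one_le_power)
qed

lemma mult_ge_min_endpoints:
  fixes x y :: "'a::linordered_idom"
  assumes "lo \<le> x" "x \<le> hi" "0 \<le> x" "c \<le> y"
  shows "min (lo * c) (hi * c) \<le> x * y"
proof -
  have "min (lo * c) (hi * c) \<le> x * c"
  proof (cases "0 \<le> c")
    case True
    then have "lo * c \<le> x * c"
      using assms(1) by (rule mult_right_mono[rotated])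
    then show ?thesis by simp
  next
    case False
    then have "hi * c \<le> x * c"
      using assms(2) by (simp add: mult_right_mono_neg)
    then show ?thesis by simp
  qed
  also have "\<dots> \<le> x * y"
    using assms(3,4) by (simp add: mult_left_mono)
  finally show ?thesis .
qed

lemma weight_a_bounds:
  fixes a s :: real
  assumes "1 \<le> al" "al \<le> a" "a \<le> ah" "ah \<le> 2" "0 \<le> slo" "slo \<le> s" "s \<le> shi"
  shows "0 \<le> slo * (8 - ah^3) / ah^6"
    and "slo * (8 - ah^3) / ah^6 \<le> s * (8 - a^3) / a^6"
    and "s * (8 - a^3) / a^6 \<le> shi * (8 - al^3) / al^6"
proof -
  have "al^3 \<le> a^3" "a^3 \<le> ah^3" "ah^3 \<le> 2^3"
    using assms(1-4) by (intro power_mono; auto)+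
  then have cubes: "al^3 \<le> a^3" "a^3 \<le> ah^3" "al^3 \<le> 8" "a^3 \<le> 8" "ah^3 \<le> 8"
    by auto
  have sixth: "al^6 \<le> a^6" "a^6 \<le> ah^6"
    using assms(1-3) by (auto intro: power_mono)
  show "0 \<le> slo * (8 - ah^3) / ah^6"
    using assms cubes by simp
  show "slo * (8 - ah^3) / ah^6 \<le> s * (8 - a^3) / a^6"
    using assms cubes sixth by (intro frac_le mult_mono) auto
  show "s * (8 - a^3) / a^6 \<le> shi * (8 - al^3) / al^6"
    using assms cubes sixth by (intro frac_le mult_mono) auto
qed

lemma weight_b_lower:
  fixes b t :: real
  assumes "2 \<le> bl" "bl \<le> b" "b \<le> bh" "0 \<le> tlo" "tlo \<le> t"
  shows "0 \<le> tlo * (bl^3 - 8) / bh^6"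
    and "tlo * (bl^3 - 8) / bh^6 \<le> t * (b^3 - 8) / b^6"
proof -
  have "2^3 \<le> bl^3" "bl^3 \<le> b^3"
    using assms(1,2) by (intro power_mono; auto)+
  then have "8 \<le> bl^3" "bl^3 \<le> b^3" "8 \<le> b^3"
    by auto
  moreover have "b^6 \<le> bh^6"
    using assms(1-3) by (auto intro: power_mono)
  ultimately show "0 \<le> tlo * (bl^3 - 8) / bh^6"
    and "tlo * (bl^3 - 8) / bh^6 \<le> t * (b^3 - 8) / b^6"
    using assms by (auto intro!: frac_le mult_mono)
qed

definition g_lower :: "real \<Rightarrow> real \<Rightarrow> real \<Rightarrow> real \<Rightarrow> real \<Rightarrow> real \<Rightarrow> real \<Rightarrow> real \<Rightarrow> real" where
  "g_lower al ah bl bh slo shi tlo thi =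
     min (slo * (8 - ah^3) / ah^6 * ((tlo - shi)^3 - ah^3))
         (shi * (8 - al^3) / al^6 * ((tlo - shi)^3 - ah^3))
     + tlo * (bl^3 - 8) / bh^6 * (bl^3 - (thi - slo)^3)"

lemma g_lower_le_g:
  assumes a: "1 \<le> al" "al \<le> a" "a \<le> ah" "ah \<le> 2"
    and b: "2 \<le> bl" "bl \<le> b" "b \<le> bh"
    and encl: "sqrt_enclosure slo shi al ah" "sqrt_enclosure tlo thi bl bh"
  shows "g_lower al ah bl bh slo shi tlo thi \<le> g a b"
proof -
  define s t where "s = sqrt (a^2 - 1)" and "t = sqrt (b^2 - 1)"
  define d where "d = t - s"
  define X Y where "X = s * (8 - a^3) / a^6" and "Y = t * (b^3 - 8) / b^6"
  have s: "slo \<le> s" "s \<le> shi" and "0 \<le> slo"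
    using sqrt_enclosureD[OF encl(1) a(1)] a encl(1) unfolding s_def sqrt_enclosure_def by auto
  have t: "tlo \<le> t" "t \<le> thi" and "0 \<le> tlo"
    using sqrt_enclosureD[OF encl(2)] a b encl(2) unfolding t_def sqrt_enclosure_def by auto
  have "t \<le> b"
    unfolding t_def using b by (simp add: real_sqrt_le_iff real_le_lsqrt)
  have "(tlo - shi)^3 \<le> d^3" "d^3 \<le> (thi - slo)^3" "d^3 \<le> b^3"
    unfolding d_def using s t \<open>t \<le> b\<close> \<open>0 \<le> slo\<close> by (auto intro!: power_mono_odd)
  moreover have "a^3 \<le> ah^3" "bl^3 \<le> b^3"
    using a b by (intro power_mono; auto)+
  ultimately have da: "(tlo - shi)^3 - ah^3 \<le> d^3 - a^3"
    and db: "bl^3 - (thi - slo)^3 \<le> b^3 - d^3" "0 \<le> b^3 - d^3"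
    by auto
  have X: "slo * (8 - ah^3) / ah^6 \<le> X" "X \<le> shi * (8 - al^3) / al^6" "0 \<le> X"
    using weight_a_bounds[OF a \<open>0 \<le> slo\<close> s] unfolding X_def by linarith+
  have Y: "0 \<le> tlo * (bl^3 - 8) / bh^6" "tlo * (bl^3 - 8) / bh^6 \<le> Y"
    using weight_b_lower[OF b \<open>0 \<le> tlo\<close> t(1)] unfolding Y_def by auto
  have "min (slo * (8 - ah^3) / ah^6 * ((tlo - shi)^3 - ah^3))
            (shi * (8 - al^3) / al^6 * ((tlo - shi)^3 - ah^3)) \<le> X * (d^3 - a^3)"
    using X da by (rule mult_ge_min_endpoints)
  moreover have "tlo * (bl^3 - 8) / bh^6 * (bl^3 - (thi - slo)^3) \<le> Y * (b^3 - d^3)"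
    using Y db by (meson mult_left_mono mult_right_mono order_trans)
  ultimately show ?thesis
    unfolding g_lower_def g_eq X_def Y_def d_def s_def t_def by linarith
qed

datatype bisection =
    Leaf real real real real
  | Split_a bisection bisection
  | Split_b bisection bisection

text \<open>A leaf carries rational enclosures [slo, shi] of sqrt (a^2 - 1) and [tlo, thi] of
  sqrt (b^2 - 1) on its box; a split halves the a- or the b-interval.\<close>

fun certifies :: "bisection \<Rightarrow> real \<Rightarrow> real \<Rightarrow> real \<Rightarrow> real \<Rightarrow> bool" where
  "certifies (Leaf slo shi tlo thi) al ah bl bh \<longleftrightarrow>
     1 \<le> al \<and> ah \<le> 2 \<and> 2 \<le> bl \<and>
     sqrt_enclosure slo shi al ah \<and> sqrt_enclosure tlo thi bl bh \<and>
     0 < g_lower al ah bl bh slo shi tlo thi"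
| "certifies (Split_a l r) al ah bl bh \<longleftrightarrow>
     certifies l al ((al + ah) / 2) bl bh \<and> certifies r ((al + ah) / 2) ah bl bh"
| "certifies (Split_b l r) al ah bl bh \<longleftrightarrow>
     certifies l al ah bl ((bl + bh) / 2) \<and> certifies r al ah ((bl + bh) / 2) bh"

lemma certifies_imp_g_pos:
  assumes "certifies c al ah bl bh" "al \<le> a" "a \<le> ah" "bl \<le> b" "b \<le> bh"
  shows "0 < g a b"
  using assms
proof (induction c arbitrary: al ah bl bh)
  case (Leaf slo shi tlo thi)
  then have "g_lower al ah bl bh slo shi tlo thi \<le> g a b"
    by (intro g_lower_le_g) auto
  with Leaf.prems(1) show ?case by simp
next
  case (Split_a l r)
  then show ?case by (cases "a \<le> (al + ah) / 2") auto
next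
  case (Split_b l r)
  then show ?case by (cases "b \<le> (bl + bh) / 2") auto
qed

definition g_pos_bisection :: bisection where
  "g_pos_bisection =
    (Split_a
      (Split_b
        (Split_a
          (Split_b
            (Split_a
              (Split_b
                (Leaf 0 (33/64) (9385/4096) (10149/4096))
                (Leaf 0 (33/64) (2537/1024) (10905/4096)))
              (Leaf (2111/4096) (3/4) (9385/4096) (10905/4096)))
            (Split_a
              (Split_b
                (Split_a
                  (Split_b
                    (Leaf 0 (1471/4096) (1363/512) (705/256))
                    (Leaf 0 (1471/4096) (11279/4096) (5827/2048)))
                  (Leaf (735/2048) (33/64) (1363/512) (5827/2048)))
                (Split_a
                  (Split_b
                    (Leaf 0 (1471/4096) (11653/4096) (6013/2048))
                    (Leaf 0 (1471/4096) (12025/4096) (12397/4096)))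
                  (Leaf (735/2048) (33/64) (11653/4096) (12397/4096))))
              (Leaf (2111/4096) (3/4) (1363/512) (12397/4096))))
          (Split_b
            (Split_a
              (Leaf (3/4) (1933/2048) (9385/4096) (10905/4096))
              (Split_b
                (Split_a
                  (Split_b
                    (Split_a
                      (Leaf (3865/4096) (2025/2048) (9385/4096) (1221/512))
                      (Leaf (4049/4096) (2115/2048) (9385/4096) (1221/512)))
                    (Leaf (3865/4096) (2115/2048) (9767/4096) (10149/4096)))
                  (Split_b
                    (Split_a
                      (Split_b
                        (Leaf (4229/4096) (4407/4096) (9385/4096) (9577/4096))
                        (Leaf (4229/4096) (4407/4096) (1197/512) (1221/512)))
                      (Split_b
                        (Split_a
                          (Leaf (2203/2048) (2247/2048) (9385/4096) (9577/4096))
                          (Leaf (4493/4096) (1145/1024) (9385/4096) (9577/4096)))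
                        (Leaf (2203/2048) (1145/1024) (1197/512) (1221/512))))
                    (Leaf (4229/4096) (1145/1024) (9767/4096) (10149/4096))))
                (Split_a
                  (Leaf (3865/4096) (2115/2048) (2537/1024) (10905/4096))
                  (Leaf (4229/4096) (1145/1024) (2537/1024) (10905/4096)))))
            (Leaf (3/4) (1145/1024) (1363/512) (12397/4096))))
        (Split_a
          (Split_b
            (Split_a
              (Split_b
                (Split_a
                  (Split_b
                    (Leaf 0 (1471/4096) (3099/1024) (399/128))
                    (Leaf 0 (1471/4096) (12767/4096) (13137/4096)))
                  (Leaf (735/2048) (33/64) (3099/1024) (13137/4096)))
                (Split_a
                  (Split_b
                    (Leaf 0 (1471/4096) (821/256) (13505/4096))
                    (Leaf 0 (1471/4096) (211/64) (867/256)))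
                  (Leaf (735/2048) (33/64) (821/256) (867/256))))
              (Leaf (2111/4096) (3/4) (3099/1024) (867/256)))
            (Split_a
              (Split_b
                (Split_a
                  (Split_b
                    (Leaf 0 (1471/4096) (13871/4096) (14239/4096))
                    (Leaf 0 (1471/4096) (7119/2048) (14605/4096)))
                  (Leaf (735/2048) (33/64) (13871/4096) (14605/4096)))
                (Split_a
                  (Split_b
                    (Leaf 0 (1471/4096) (3651/1024) (7485/2048))
                    (Leaf 0 (1471/4096) (14969/4096) (15335/4096)))
                  (Leaf (735/2048) (33/64) (3651/1024) (15335/4096))))
              (Leaf (2111/4096) (3/4) (13871/4096) (15335/4096))))
          (Leaf (3/4) (1145/1024) (3099/1024) (15335/4096))))
      (Split_b
        (Split_a
          (Split_b
            (Split_a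
              (Split_b
                (Split_a
                  (Split_b
                    (Split_a
                      (Split_b
                        (Split_a
                          (Split_b
                            (Leaf (4579/4096) (4665/4096) (9385/4096) (4741/2048))
                            (Leaf (4579/4096) (4665/4096) (9481/4096) (9577/4096)))
                          (Split_b
                            (Leaf (583/512) (2375/2048) (9385/4096) (4741/2048))
                            (Leaf (583/512) (2375/2048) (9481/4096) (9577/4096))))
                        (Leaf (4579/4096) (2375/2048) (1197/512) (1221/512)))
                      (Split_b
                        (Split_a
                          (Split_b
                            (Leaf (4749/4096) (4835/4096) (9385/4096) (4741/2048))
                            (Leaf (4749/4096) (4835/4096) (9481/4096) (9577/4096)))
                          (Split_b
                            (Leaf (2417/2048) (2459/2048) (9385/4096) (4741/2048))
                            (Leaf (2417/2048) (2459/2048) (9481/4096) (9577/4096))))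
                        (Leaf (4749/4096) (2459/2048) (1197/512) (1221/512))))
                    (Split_a
                      (Leaf (4579/4096) (2375/2048) (9767/4096) (10149/4096))
                      (Leaf (4749/4096) (2459/2048) (9767/4096) (10149/4096))))
                  (Split_b
                    (Split_a
                      (Split_b
                        (Split_a
                          (Split_b
                            (Leaf (4917/4096) (5001/4096) (9385/4096) (4741/2048))
                            (Leaf (4917/4096) (5001/4096) (9481/4096) (9577/4096)))
                          (Split_b
                            (Leaf (625/512) (1271/1024) (9385/4096) (4741/2048))
                            (Leaf (625/512) (1271/1024) (9481/4096) (9577/4096))))
                        (Leaf (4917/4096) (1271/1024) (1197/512) (1221/512)))
                      (Split_b
                        (Split_a
                          (Split_b
                            (Leaf (5083/4096) (2583/2048) (9385/4096) (4741/2048))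
                            (Leaf (5083/4096) (2583/2048) (9481/4096) (9577/4096)))
                          (Leaf (5165/4096) (5247/4096) (9385/4096) (9577/4096)))
                        (Leaf (5083/4096) (5247/4096) (1197/512) (1221/512))))
                    (Split_a
                      (Leaf (4917/4096) (1271/1024) (9767/4096) (10149/4096))
                      (Leaf (5083/4096) (5247/4096) (9767/4096) (10149/4096)))))
                (Split_a
                  (Split_b
                    (Leaf (4579/4096) (2459/2048) (2537/1024) (329/128))
                    (Leaf (4579/4096) (2459/2048) (10527/4096) (10905/4096)))
                  (Split_b
                    (Leaf (4917/4096) (5247/4096) (2537/1024) (329/128))
                    (Leaf (4917/4096) (5247/4096) (10527/4096) (10905/4096)))))
              (Split_b
                (Split_a
                  (Split_b
                    (Split_a
                      (Split_b
                        (Split_a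
                          (Leaf (2623/2048) (333/256) (9385/4096) (9577/4096))
                          (Leaf (5327/4096) (169/128) (9385/4096) (9577/4096)))
                        (Leaf (2623/2048) (169/128) (1197/512) (1221/512)))
                      (Split_b
                        (Leaf (5407/4096) (87/64) (9385/4096) (9577/4096))
                        (Leaf (5407/4096) (87/64) (1197/512) (1221/512))))
                    (Split_a
                      (Leaf (2623/2048) (169/128) (9767/4096) (10149/4096))
                      (Leaf (5407/4096) (87/64) (9767/4096) (10149/4096))))
                  (Split_b
                    (Split_a
                      (Leaf (5567/4096) (2863/2048) (9385/4096) (1221/512))
                      (Leaf (5725/4096) (5883/4096) (9385/4096) (1221/512)))
                    (Leaf (5567/4096) (5883/4096) (9767/4096) (10149/4096))))
                (Split_a
                  (Split_b
                    (Leaf (2623/2048) (87/64) (2537/1024) (329/128))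
                    (Leaf (2623/2048) (87/64) (10527/4096) (10905/4096)))
                  (Leaf (5567/4096) (5883/4096) (2537/1024) (10905/4096)))))
            (Split_a
              (Split_b
                (Leaf (4579/4096) (5247/4096) (1363/512) (5827/2048))
                (Leaf (4579/4096) (5247/4096) (11653/4096) (12397/4096)))
              (Split_b
                (Split_a
                  (Leaf (2623/2048) (87/64) (1363/512) (5827/2048))
                  (Leaf (5567/4096) (5883/4096) (1363/512) (5827/2048)))
                (Leaf (2623/2048) (5883/4096) (11653/4096) (12397/4096)))))
          (Split_b
            (Split_a
              (Split_b
                (Split_a
                  (Split_b
                    (Leaf (2941/2048) (387/256) (9385/4096) (1221/512))
                    (Leaf (2941/2048) (387/256) (9767/4096) (10149/4096)))
                  (Leaf (6191/4096) (6497/4096) (9385/4096) (10149/4096)))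
                (Leaf (2941/2048) (6497/4096) (2537/1024) (10905/4096)))
              (Leaf (203/128) (7095/4096) (9385/4096) (10905/4096)))
            (Split_a
              (Split_b
                (Leaf (2941/2048) (6497/4096) (1363/512) (5827/2048))
                (Leaf (2941/2048) (6497/4096) (11653/4096) (12397/4096)))
              (Leaf (203/128) (7095/4096) (1363/512) (12397/4096)))))
        (Split_a
          (Split_b
            (Leaf (4579/4096) (5883/4096) (3099/1024) (867/256))
            (Leaf (4579/4096) (5883/4096) (13871/4096) (15335/4096)))
          (Split_b
            (Leaf (2941/2048) (7095/4096) (3099/1024) (867/256))
            (Leaf (2941/2048) (7095/4096) (13871/4096) (15335/4096))))))"

lemma certifies_g_pos_bisection: "certifies g_pos_bisection 1 2 (5/2) (31/8)"
  by (simp add: g_pos_bisection_def g_lower_def sqrt_enclosure_def power_divide)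

lemma sqrt_2_sqrt_3_bound: "sqrt 2 * (sqrt 3 + 1) \<le> 31/8"
proof -
  have "sqrt 3 \<le> 17321/10000" "sqrt 2 \<le> 14143/10000"
    by (rule real_le_lsqrt; simp add: power_divide)+
  then have "sqrt 2 * (sqrt 3 + 1) \<le> 14143/10000 * (17321/10000 + 1)"
    by (intro mult_mono) auto
  then show ?thesis by simp
qed

theorem lemma5:
  fixes a b :: real
  assumes "1 \<le> a" "a \<le> 2" "5/2 \<le> b" "b \<le> sqrt 2 * (sqrt 3 + 1)"
  shows "g a b \<noteq> 0"
proof -
  have "b \<le> 31/8"
    using assms(4) sqrt_2_sqrt_3_bound by linarith
  have "0 < g a b"
    using certifies_g_pos_bisection
    by (rule certifies_imp_g_pos) (use assms \<open>b \<le> 31/8\<close> in auto)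
  then show ?thesis by simp
qed

end
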